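(* Let $s,t,\eta>0$, $A\in\mathbb{R}^{m\times N}$ and $K\subset[N]$. Suppose there exists $\nu\in\mathbb{R}^m$ with $A^T\nu\in H_K^t$ and $\|\nu\|_2\le s$. Let $x_0=\mathbb{1}_K$ and $b=Ax_0+n$ with $n\in\mathbb{R}^m$, $\|n\|_2\le\eta$. Then any solution $x_*$ of $$\min\|Ax-b\|_2\ \text{subject to}\ x\in[0,1]^N,$$ or of $$\min\|x\|_1\ \text{subject to}\ \|Ax-b\|_2\le\eta,\ x\in[0,1]^N,$$ satisfies $\|x_*-x_0\|_2\le \frac{2s}{t}\eta$.
   Context: $\mathbb{1}_K$ is the indicator vector of $K\subset[N]$. For $t>0$, $H_K^t=\{w\in\mathbb{R}^N: w_i<-t \text{ for } i\in K,\ w_i>t \text{ for } i\notin K\}$. *)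

theory Defs
  imports "HOL-Analysis.Analysis"
begin

text \<open>Index set [N] is the finite type 'n; [m] is the finite type 'm.\<close>

definition indicator_vec :: "'n::finite set \<Rightarrow> real ^ 'n" where
  "indicator_vec K = (\<chi> i. if i \<in> K then 1 else 0)"

definition H_set :: "'n::finite set \<Rightarrow> real \<Rightarrow> (real ^ 'n) set" where
  "H_set K t = {w. (\<forall>i\<in>K. w $ i < - t) \<and> (\<forall>i. i \<notin> K \<longrightarrow> w $ i > t)}"

definition unit_box :: "(real ^ 'n::finite) set" where
  "unit_box = {x. \<forall>i. 0 \<le> x $ i \<and> x $ i \<le> 1}"

definition l1norm :: "real ^ 'n::finite \<Rightarrow> real" where
  "l1norm x = (\<Sum>i\<in>UNIV. \<bar>x $ i\<bar>)"

definition is_box_ls_solution :: "real ^ 'n ^ 'm \<Rightarrow> real ^ 'm \<Rightarrow> real ^ 'n \<Rightarrow> bool" where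
  "is_box_ls_solution A b x \<longleftrightarrow> x \<in> unit_box \<and>
     (\<forall>y\<in>unit_box. norm (A *v x - b) \<le> norm (A *v y - b))"

definition is_box_bpdn_solution :: "real ^ 'n ^ 'm \<Rightarrow> real ^ 'm \<Rightarrow> real \<Rightarrow> real ^ 'n \<Rightarrow> bool" where
  "is_box_bpdn_solution A b \<eta> x \<longleftrightarrow> x \<in> unit_box \<and> norm (A *v x - b) \<le> \<eta> \<and>
     (\<forall>y\<in>unit_box. norm (A *v y - b) \<le> \<eta> \<longrightarrow> l1norm x \<le> l1norm y)"

end

theory Submission
  imports Defs
begin

text \<open>Write \<open>h = x - \<one>\<^sub>K\<close> for a point \<open>x\<close> of the box. On \<open>K\<close> we have \<open>h\<^sub>i \<le> 0\<close> and on the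
  complement \<open>h\<^sub>i \<ge> 0\<close>, so the sign pattern of the dual certificate \<open>w = A\<^sup>T\<nu> \<in> H\<^sub>K\<^sup>t\<close> gives
  \<open>t \<parallel>h\<parallel>\<^sub>1 \<le> \<langle>w, h\<rangle> = \<langle>\<nu>, Ah\<rangle> \<le> \<parallel>\<nu>\<parallel>\<^sub>2 \<parallel>Ah\<parallel>\<^sub>2\<close>. For either program the minimizer has residual
  at most \<open>\<eta>\<close> (the ground truth \<open>\<one>\<^sub>K\<close> is feasible), so \<open>\<parallel>Ah\<parallel>\<^sub>2 \<le> 2\<eta>\<close>, and \<open>\<parallel>h\<parallel>\<^sub>2 \<le> \<parallel>h\<parallel>\<^sub>1\<close>.\<close>

lemma indicator_vec_in_unit_box: "indicator_vec K \<in> unit_box"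
  by (simp add: unit_box_def indicator_vec_def)

lemma norm_le_l1norm: "norm x \<le> l1norm x"
  using norm_le_l1_cart by (simp add: l1norm_def)

lemma H_set_inner_ge_l1norm:
  assumes "w \<in> H_set K t" and "x \<in> unit_box"
  shows "t * l1norm (x - indicator_vec K) \<le> w \<bullet> (x - indicator_vec K)"
proof -
  define h where "h = x - indicator_vec K"
  have coord: "t * \<bar>h $ i\<bar> \<le> w $ i * h $ i" for i
  proof (cases "i \<in> K")
    case True
    then have "t \<le> - w $ i" "h $ i \<le> 0"
      using assms by (auto simp: H_set_def h_def indicator_vec_def unit_box_def)
    then show ?thesis using mult_right_mono_neg[of t "- w $ i" "h $ i"] by (simp add: abs_of_nonpos)
  next
    case False
    then have "t \<le> w $ i" "0 \<le> h $ i"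
      using assms by (auto simp: H_set_def h_def indicator_vec_def unit_box_def)
    then show ?thesis by (simp add: mult_right_mono)
  qed
  have "t * l1norm h = (\<Sum>i\<in>UNIV. t * \<bar>h $ i\<bar>)"
    by (simp add: l1norm_def sum_distrib_left)
  also have "\<dots> \<le> (\<Sum>i\<in>UNIV. w $ i * h $ i)"
    by (rule sum_mono) (rule coord)
  also have "\<dots> = w \<bullet> h"
    by (simp add: inner_vec_def)
  finally show ?thesis unfolding h_def .
qed

lemma dual_certificate_recovery_bound:
  fixes A :: "real ^ 'n ^ 'm"
  assumes "transpose A *v \<nu> \<in> H_set K t" and "t > 0" and "x \<in> unit_box"
    and "norm (A *v (x - indicator_vec K)) \<le> \<delta>"
  shows "t * norm (x - indicator_vec K) \<le> norm \<nu> * \<delta>"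
proof -
  define h where "h = x - indicator_vec K"
  have "t * norm h \<le> t * l1norm h"
    using norm_le_l1norm assms(2) by (intro mult_left_mono) auto
  also have "\<dots> \<le> (transpose A *v \<nu>) \<bullet> h"
    unfolding h_def using assms(1,3) by (rule H_set_inner_ge_l1norm)
  also have "\<dots> = \<nu> \<bullet> (A *v h)"
    by (simp add: dot_lmul_matrix)
  also have "\<dots> \<le> norm \<nu> * norm (A *v h)"
    by (rule norm_cauchy_schwarz)
  also have "\<dots> \<le> norm \<nu> * \<delta>"
    using assms(4) by (simp add: h_def mult_left_mono)
  finally show ?thesis unfolding h_def .
qed

lemma box_solution_residual_le:
  assumes "b = A *v indicator_vec K + n" and "norm n \<le> \<eta>"
    and "is_box_ls_solution A b x \<or> is_box_bpdn_solution A b \<eta> x"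
  shows "x \<in> unit_box" and "norm (A *v x - b) \<le> \<eta>"
proof -
  show "x \<in> unit_box"
    using assms(3) by (auto simp: is_box_ls_solution_def is_box_bpdn_solution_def)
  have "norm (A *v indicator_vec K - b) \<le> \<eta>"
    using assms(1,2) by simp
  then show "norm (A *v x - b) \<le> \<eta>"
    using assms(3) indicator_vec_in_unit_box
    by (auto simp: is_box_ls_solution_def is_box_bpdn_solution_def intro: order_trans)
qed

theorem proposition3p4:
  fixes A :: "real ^ 'n ^ 'm" and K :: "'n set" and s t \<eta> :: real
    and \<nu> :: "real ^ 'm" and n :: "real ^ 'm" and b :: "real ^ 'm" and xs :: "real ^ 'n"
  assumes "s > 0" and "t > 0" and "\<eta> > 0"
    and "transpose A *v \<nu> \<in> H_set K t" and "norm \<nu> \<le> s"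
    and "b = A *v indicator_vec K + n" and "norm n \<le> \<eta>"
    and "is_box_ls_solution A b xs \<or> is_box_bpdn_solution A b \<eta> xs"
  shows "norm (xs - indicator_vec K) \<le> 2 * s / t * \<eta>"
proof -
  have box: "xs \<in> unit_box" and residual: "norm (A *v xs - b) \<le> \<eta>"
    using box_solution_residual_le[OF assms(6-8)] by auto
  have "A *v (xs - indicator_vec K) = (A *v xs - b) + n"
    using assms(6) by (simp add: matrix_vector_mult_diff_distrib)
  then have misfit: "norm (A *v (xs - indicator_vec K)) \<le> 2 * \<eta>"
    using residual assms(7) norm_triangle_ineq[of "A *v xs - b" n] by simp
  have "t * norm (xs - indicator_vec K) \<le> norm \<nu> * (2 * \<eta>)"
    using dual_certificate_recovery_bound[OF assms(4,2) box misfit] .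
  also have "\<dots> \<le> s * (2 * \<eta>)"
    using assms(3,5) by (simp add: mult_right_mono)
  finally show ?thesis
    using assms(2) by (simp add: field_simps)
qed

end
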